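(* Let $\kappa$ be an infinite cardinal and let $\alpha$ be an uncountable cardinal with $\alpha\leq\kappa^+$. Let $h:P(\kappa,\alpha)\to\mathbb{Z}$ be a group homomorphism. Then there are only finitely many $\xi\in\kappa$ such that $h(e_\xi)\neq0$.
   Context: $\mathbb{Z}^\kappa$ is the group of functions $x:\kappa\to\mathbb{Z}$ under pointwise addition, $\mathrm{supp}(x)=\{\xi\in\kappa:x(\xi)\neq0\}$, and $P(\kappa,\alpha)=\{x\in\mathbb{Z}^\kappa:|\mathrm{supp}(x)|<\alpha\}$. For $\xi\in\kappa$, $e_\xi\in P(\kappa,\alpha)$ is defined by $e_\xi(\xi)=1$ and $e_\xi(\eta)=0$ for $\eta\neq\xi$. *)

theory Defs
  imports Main "HOL-Library.Function_Algebras"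
begin

definition supp :: "('k \<Rightarrow> int) \<Rightarrow> 'k set" where
  "supp x = {\<xi>. x \<xi> \<noteq> 0}"

(* P(kappa, alpha) = {x. |supp x| < alpha}, kappa = UNIV :: 'k set,
   alpha a cardinal given as a cardinal order relation *)
definition Pset :: "'b rel \<Rightarrow> ('k \<Rightarrow> int) set" where
  "Pset alpha = {x. (card_of (supp x), alpha) \<in> ordLess}"

definition unitvec :: "'k \<Rightarrow> 'k \<Rightarrow> int" where
  "unitvec \<xi> = (\<lambda>\<eta>. if \<eta> = \<xi> then 1 else 0)"

end

theory Submission
  imports Defs "HOL-Library.Countable_Set_Type"
begin

(* Suppose h(e_\<xi>) \<noteq> 0 for infinitely many \<xi>, say for \<xi>_0, \<xi>_1, ... distinct, and put
   a_n = h(e_{\<xi>_n}) and r_n = 2|a_n| + 2.  The countably supported vectors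
   t_N = \<Sum>_{n \<ge> N} (r_N \<cdots> r_{n-1}) e_{\<xi>_n} lie in P(\<kappa>, \<alpha>) because \<alpha> is uncountable, and
   t_N = e_{\<xi>_N} + r_N t_{N+1}.  Hence h(t_N) = a_N + r_N h(t_{N+1}), and the size of r_N
   forces |h(t_{N+1})| < |h(t_N)| for every N: an infinite descent in the naturals. *)

lemma of_int_fun_apply [simp]: "(of_int c :: 'a \<Rightarrow> 'b::ring_1) x = of_int c"
  by (cases c rule: int_cases) simp_all

lemma additive_of_int_mult:
  fixes g :: "'a::ring_1 \<Rightarrow> 'b::ring_1"
  assumes add: "\<And>x y. g (x + y) = g x + g y"
  shows "g (of_int c * x) = of_int c * g x"
proof -
  have nat_mult: "g (of_nat n * x) = of_nat n * g x" for n
  proof (induction n)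
    case 0
    have "g 0 = g 0 + g 0" using add[of 0 0] by simp
    then show ?case by simp
  next
    case (Suc n)
    have "g (of_nat (Suc n) * x) = g (x + of_nat n * x)" by (simp add: algebra_simps)
    then show ?case using Suc add by (simp add: algebra_simps)
  qed
  have uminus: "g (- y) = - g y" for y
    using add[of "- y" y] nat_mult[of 0] by (simp add: eq_neg_iff_add_eq_0)
  show ?thesis
  proof (cases "c \<ge> 0")
    case True
    then show ?thesis using nat_mult[of "nat c"] by simp
  next
    case False
    then have "of_int c * x = - (of_nat (nat (- c)) * x)" by simp
    then show ?thesis using nat_mult[of "nat (- c)"] uminus False by simp
  qed
qed

lemma abs_lt_of_recurrence:
  fixes a t t' :: int
  assumes "a \<noteq> 0" "t = a + (2 * \<bar>a\<bar> + 2) * t'"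
  shows "\<bar>t'\<bar> < \<bar>t\<bar>"
proof (cases "t' = 0")
  case True
  then show ?thesis using assms by simp
next
  case False
  then have "1 \<le> \<bar>t'\<bar>" by linarith
  then have "\<bar>a\<bar> \<le> \<bar>a\<bar> * \<bar>t'\<bar>" by (simp add: mult_le_cancel_left1)
  moreover have "\<bar>(2 * \<bar>a\<bar> + 2) * t'\<bar> = 2 * (\<bar>a\<bar> * \<bar>t'\<bar>) + 2 * \<bar>t'\<bar>"
    by (simp only: abs_mult) (simp add: algebra_simps)
  ultimately show ?thesis using assms(2) False by linarith
qed

definition specker_tail :: "(nat \<Rightarrow> int) \<Rightarrow> nat \<Rightarrow> nat \<Rightarrow> int" where
  "specker_tail r N = (\<lambda>n. if N \<le> n then \<Prod>i\<in>{N..<n}. r i else 0)"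

lemma specker_tail_Suc:
  "specker_tail r N = unitvec N + of_int (r N) * specker_tail r (Suc N)"
proof
  fix n
  show "specker_tail r N n = (unitvec N + of_int (r N) * specker_tail r (Suc N)) n"
  proof (cases "N < n")
    case True
    then have "(\<Prod>i\<in>{N..<n}. r i) = r N * (\<Prod>i\<in>{Suc N..<n}. r i)"
      by (simp add: prod.atLeast_Suc_lessThan)
    then show ?thesis using True by (simp add: specker_tail_def unitvec_def)
  qed (auto simp: specker_tail_def unitvec_def)
qed

lemma additive_vanishes_on_some_unitvec:
  fixes g :: "(nat \<Rightarrow> int) \<Rightarrow> int"
  assumes add: "\<And>x y. g (x + y) = g x + g y"
  shows "\<exists>n. g (unitvec n) = 0"
proof (rule ccontr)
  assume "\<nexists>n. g (unitvec n) = 0"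
  then have nonzero: "g (unitvec n) \<noteq> 0" for n by blast
  define r where "r n = 2 * \<bar>g (unitvec n)\<bar> + 2" for n
  define t where "t N = g (specker_tail r N)" for N
  have rec: "t N = g (unitvec N) + r N * t (Suc N)" for N
    unfolding t_def by (subst specker_tail_Suc) (simp add: add additive_of_int_mult)
  have "\<bar>t (Suc N)\<bar> < \<bar>t N\<bar>" for N
    using abs_lt_of_recurrence[OF nonzero rec[unfolded r_def]] .
  then have "(t (Suc N), t N) \<in> measure (\<lambda>z. nat \<bar>z\<bar>)" for N
    unfolding in_measure by (rule iffD2[OF nat_less_eq_zless[OF abs_ge_zero]])
  then show False
    using wf_iff_no_infinite_down_chain[of "measure (\<lambda>z. nat \<bar>z\<bar>)"] by auto
qed

definition pushforward :: "('a \<Rightarrow> 'b) \<Rightarrow> ('a \<Rightarrow> 'c::zero) \<Rightarrow> 'b \<Rightarrow> 'c" where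
  "pushforward \<xi> f = (\<lambda>\<eta>. if \<eta> \<in> range \<xi> then f (inv \<xi> \<eta>) else 0)"

lemma pushforward_add:
  "pushforward \<xi> (f + g) = pushforward \<xi> f + pushforward \<xi> (g :: _ \<Rightarrow> 'c::monoid_add)"
  by (auto simp: pushforward_def)

lemma pushforward_unitvec:
  assumes "inj \<xi>"
  shows "pushforward \<xi> (unitvec n) = unitvec (\<xi> n)"
  using assms by (auto simp: pushforward_def unitvec_def fun_eq_iff)

lemma countable_supp_pushforward:
  fixes \<xi> :: "'a::countable \<Rightarrow> 'k"
  shows "countable (supp (pushforward \<xi> f))"
proof (rule countable_subset)
  show "supp (pushforward \<xi> f) \<subseteq> range \<xi>" by (auto simp: supp_def pushforward_def)
qed simp

lemma finite_unitvec_nonzero_if_additive_on_countable_supp: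
  fixes h :: "('k \<Rightarrow> int) \<Rightarrow> int"
  assumes add: "\<And>x y. countable (supp x) \<Longrightarrow> countable (supp y) \<Longrightarrow> h (x + y) = h x + h y"
  shows "finite {\<xi>. h (unitvec \<xi>) \<noteq> 0}"
proof (rule ccontr)
  assume "infinite {\<xi>. h (unitvec \<xi>) \<noteq> 0}"
  then obtain \<xi> :: "nat \<Rightarrow> 'k" where "inj \<xi>" and nonzero: "range \<xi> \<subseteq> {\<xi>. h (unitvec \<xi>) \<noteq> 0}"
    unfolding infinite_iff_countable_subset by blast
  define g where "g x = h (pushforward \<xi> x)" for x
  have "g (x + y) = g x + g y" for x y
    unfolding g_def pushforward_add by (rule add) (rule countable_supp_pushforward)+
  then obtain n where "g (unitvec n) = 0"
    using additive_vanishes_on_some_unitvec by blast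
  then have "h (unitvec (\<xi> n)) = 0"
    unfolding g_def pushforward_unitvec[OF \<open>inj \<xi>\<close>] .
  then show False using nonzero by blast
qed

lemma countable_supp_in_Pset:
  assumes "(natLeq, alpha) \<in> ordLess" "countable (supp x)"
  shows "x \<in> Pset alpha"
  using assms countable_card_le_natLeq ordLeq_ordLess_trans by (fastforce simp: Pset_def)

theorem mainTheorem7:
  fixes alpha :: "'b rel" and h :: "('k \<Rightarrow> int) \<Rightarrow> int"
  assumes kappa_inf: "infinite (UNIV :: 'k set)"
    and alpha_card: "Card_order alpha"
    and alpha_uncountable: "(natLeq, alpha) \<in> ordLess"
    and alpha_le: "(alpha, cardSuc (card_of (UNIV :: 'k set))) \<in> ordLeq"
    and hom: "\<And>x y. x \<in> Pset alpha \<Longrightarrow> y \<in> Pset alpha \<Longrightarrow> h (x + y) = h x + h y"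
  shows "finite {\<xi>. h (unitvec \<xi>) \<noteq> 0}"
  using finite_unitvec_nonzero_if_additive_on_countable_supp
    countable_supp_in_Pset[OF alpha_uncountable] hom
  by blast

end
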